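(* Let $q$ be a prime power, let $1\le t<k\le m$ be integers, and let $M\in\mathrm{Mat}(t\times k,\mathbb{F}_{q^m})$ be a full-rank matrix almost in row-reduced echelon form, with rows $M_1,\dots,M_t$. Assume that $M_1$ has at least one entry in $\mathbb{F}_{q^m}\setminus\mathbb{F}_q$. Then there exist $\mathbb{F}_q$-linearly independent elements $\alpha_1,\dots,\alpha_t\in\mathbb{F}_{q^m}$ such that $\mathrm{rk}\left(\sum_{i=1}^t\alpha_iM_i\right)\ge t+1$.
   Context: For $v\in\mathbb{F}_{q^m}^k$, $\mathrm{rk}(v):=\dim_{\mathbb{F}_q}\mathrm{Span}_{\mathbb{F}_q}\{v_1,\dots,v_k\}$. A matrix is in row-reduced echelon form if each row has more initial zeros than the previous rows, and the first non-zero entry of any non-zero row equals $1$ and is the only non-zero entry in its column. A $t\times k$ matrix $M$ is almost in row-reduced echelon form if the matrix obtained by permuting its rows by some permutation of $\{1,\dots,t\}$ is in row-reduced echelon form. *)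

theory Defs
  imports "HOL-Computational_Algebra.Primes"
begin

definition is_subfield :: "'a::field set \<Rightarrow> bool" where
  "is_subfield F \<longleftrightarrow> 0 \<in> F \<and> 1 \<in> F \<and>
     (\<forall>x\<in>F. \<forall>y\<in>F. x + y \<in> F \<and> x * y \<in> F) \<and>
     (\<forall>x\<in>F. - x \<in> F) \<and> (\<forall>x\<in>F. x \<noteq> 0 \<longrightarrow> inverse x \<in> F)"

definition prime_power :: "nat \<Rightarrow> bool" where
  "prime_power q \<longleftrightarrow> (\<exists>p n. prime p \<and> n \<ge> 1 \<and> q = p ^ n)"

definition lin_indep_set_over :: "'a::field set \<Rightarrow> 'a set \<Rightarrow> bool" where
  "lin_indep_set_over F S \<longleftrightarrow> finite S \<and>
     (\<forall>c. (\<forall>x\<in>S. c x \<in> F) \<longrightarrow> (\<Sum>x\<in>S. c x * x) = 0 \<longrightarrow> (\<forall>x\<in>S. c x = 0))"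

definition lin_indep_family_over :: "'a::field set \<Rightarrow> nat \<Rightarrow> (nat \<Rightarrow> 'a) \<Rightarrow> bool" where
  "lin_indep_family_over F t \<alpha> \<longleftrightarrow>
     (\<forall>c. (\<forall>i<t. c i \<in> F) \<longrightarrow> (\<Sum>i<t. c i * \<alpha> i) = 0 \<longrightarrow> (\<forall>i<t. c i = 0))"

(* rk(v) = dim_F Span_F {v_0,...,v_{k-1}}, i.e. the maximal size of an
   F-linearly independent subset of the entries *)
definition rk_over :: "'a::field set \<Rightarrow> nat \<Rightarrow> (nat \<Rightarrow> 'a) \<Rightarrow> nat" where
  "rk_over F k v = Max {card S | S. S \<subseteq> v ` {0..<k} \<and> lin_indep_set_over F S}"

(* Matrices t x k are functions nat => nat => 'a, entries A i j for i<t, j<k. *)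
definition row_nonzero :: "nat \<Rightarrow> (nat \<Rightarrow> nat \<Rightarrow> 'a::zero) \<Rightarrow> nat \<Rightarrow> bool" where
  "row_nonzero k A i \<longleftrightarrow> (\<exists>j<k. A i j \<noteq> 0)"

definition lead_pos :: "nat \<Rightarrow> (nat \<Rightarrow> nat \<Rightarrow> 'a::zero) \<Rightarrow> nat \<Rightarrow> nat" where
  "lead_pos k A i = (if row_nonzero k A i then (LEAST j. A i j \<noteq> 0) else k)"

definition rref :: "nat \<Rightarrow> nat \<Rightarrow> (nat \<Rightarrow> nat \<Rightarrow> 'a::{zero,one}) \<Rightarrow> bool" where
  "rref t k A \<longleftrightarrow>
     (\<forall>i1 i2. i1 < i2 \<and> i2 < t \<and> row_nonzero k A i2 \<longrightarrow>
         row_nonzero k A i1 \<and> lead_pos k A i1 < lead_pos k A i2) \<and>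
     (\<forall>i<t. row_nonzero k A i \<longrightarrow>
         A i (lead_pos k A i) = 1 \<and>
         (\<forall>i'<t. i' \<noteq> i \<longrightarrow> A i' (lead_pos k A i) = 0))"

definition almost_rref :: "nat \<Rightarrow> nat \<Rightarrow> (nat \<Rightarrow> nat \<Rightarrow> 'a::{zero,one}) \<Rightarrow> bool" where
  "almost_rref t k A \<longleftrightarrow>
     (\<exists>\<sigma>. bij_betw \<sigma> {0..<t} {0..<t} \<and> rref t k (\<lambda>i j. A (\<sigma> i) j))"

definition full_row_rank :: "nat \<Rightarrow> nat \<Rightarrow> (nat \<Rightarrow> nat \<Rightarrow> 'a::field) \<Rightarrow> bool" where
  "full_row_rank t k A \<longleftrightarrow>
     (\<forall>c. (\<forall>j<k. (\<Sum>i<t. c i * A i j) = 0) \<longrightarrow> (\<forall>i<t. c i = 0))"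

end

theory Submission
  imports Defs "HOL-Library.FuncSet"
begin

(* Choose \<alpha>_1, ..., \<alpha>_{t-1} independent over F_q and then \<alpha>_0 outside a set of at most
   (q + 1) q^(t-1) < q^m bad values, so that \<alpha> stays independent and the entry
   w = \<Sum> \<alpha>_i M_i j0 at a column j0 with M_0 j0 \<notin> F_q lies outside the F_q-span of the \<alpha>_i.
   Since M is almost in row-reduced echelon form, every \<alpha>_i is itself an entry of
   \<Sum> \<alpha>_i M_i (at the pivot column of row i), so \<alpha>_0, ..., \<alpha>_{t-1}, w are t + 1
   independent entries. *)

definition lin_indep_on :: "'a::field set \<Rightarrow> 'i set \<Rightarrow> ('i \<Rightarrow> 'a) \<Rightarrow> bool" where
  "lin_indep_on F I \<alpha> \<longleftrightarrow>
     (\<forall>c. (\<forall>i\<in>I. c i \<in> F) \<longrightarrow> (\<Sum>i\<in>I. c i * \<alpha> i) = 0 \<longrightarrow> (\<forall>i\<in>I. c i = 0))"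

definition lin_span_on :: "'a::field set \<Rightarrow> 'i set \<Rightarrow> ('i \<Rightarrow> 'a) \<Rightarrow> 'a set" where
  "lin_span_on F I \<alpha> = {\<Sum>i\<in>I. c i * \<alpha> i | c. \<forall>i\<in>I. c i \<in> F}"

lemma lin_indep_family_over_iff_lin_indep_on:
  "lin_indep_family_over F t \<alpha> \<longleftrightarrow> lin_indep_on F {..<t} \<alpha>"
  unfolding lin_indep_family_over_def lin_indep_on_def by auto

lemma subfield_mult: "is_subfield F \<Longrightarrow> x \<in> F \<Longrightarrow> y \<in> F \<Longrightarrow> x * y \<in> F"
  unfolding is_subfield_def by blast

lemma subfield_uminus: "is_subfield F \<Longrightarrow> x \<in> F \<Longrightarrow> - x \<in> F"
  unfolding is_subfield_def by blast

lemma subfield_inverse: "is_subfield F \<Longrightarrow> x \<in> F \<Longrightarrow> inverse x \<in> F"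
  unfolding is_subfield_def by (cases "x = 0") auto

lemma card_subfield_ge_2:
  assumes "is_subfield F" and "finite F"
  shows "2 \<le> card F"
proof -
  have "{0, 1} \<subseteq> F" using assms(1) unfolding is_subfield_def by simp
  then have "card {0, 1 :: 'a} \<le> card F" using assms(2) by (rule card_mono[rotated])
  then show ?thesis by simp
qed

subsection \<open>Linear independence and spans over a subfield\<close>

lemma lin_indep_on_insert:
  assumes F: "is_subfield F" and ind: "lin_indep_on F I \<alpha>"
    and I: "finite I" "i0 \<notin> I" and x: "x \<notin> lin_span_on F I \<alpha>"
  shows "lin_indep_on F (insert i0 I) (\<alpha>(i0 := x))"
  unfolding lin_indep_on_def
proof (intro allI impI)
  fix c assume c: "\<forall>i\<in>insert i0 I. c i \<in> F"
    and "(\<Sum>i\<in>insert i0 I. c i * (\<alpha>(i0 := x)) i) = 0"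
  moreover have "(\<Sum>i\<in>I. c i * (\<alpha>(i0 := x)) i) = (\<Sum>i\<in>I. c i * \<alpha> i)"
    by (rule sum.cong) (use I in auto)
  ultimately have sum0: "c i0 * x + (\<Sum>i\<in>I. c i * \<alpha> i) = 0"
    using I by simp
  have ci0: "c i0 = 0"
  proof (rule ccontr)
    assume nz: "c i0 \<noteq> 0"
    define d where "d i = c i * - inverse (c i0)" for i
    have "(\<Sum>i\<in>I. d i * \<alpha> i) = (\<Sum>i\<in>I. c i * \<alpha> i) * - inverse (c i0)"
      unfolding d_def sum_distrib_right by (rule sum.cong) (simp_all add: algebra_simps)
    also have "\<dots> = x"
      using sum0 nz by (simp add: add_eq_0_iff)
    finally have "x = (\<Sum>i\<in>I. d i * \<alpha> i)" by simp
    moreover have "\<forall>i\<in>I. d i \<in> F"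
      unfolding d_def using c F by (auto intro!: subfield_mult subfield_uminus subfield_inverse)
    ultimately show False
      using x unfolding lin_span_on_def by blast
  qed
  then have "\<forall>i\<in>I. c i = 0"
    using sum0 ind c unfolding lin_indep_on_def by simp
  with ci0 show "\<forall>i\<in>insert i0 I. c i = 0" by simp
qed

lemma lin_span_on_insert:
  fixes \<alpha> :: "'i \<Rightarrow> 'a::field"
  assumes "finite I" and "i0 \<notin> I"
  shows "y \<in> lin_span_on F (insert i0 I) (\<alpha>(i0 := x)) \<longleftrightarrow>
           (\<exists>d\<in>F. y - d * x \<in> lin_span_on F I \<alpha>)"
proof -
  have split: "(\<Sum>i\<in>insert i0 I. c i * (\<alpha>(i0 := x)) i) = c i0 * x + (\<Sum>i\<in>I. c i * \<alpha> i)"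
    for c :: "_ \<Rightarrow> 'a"
  proof -
    have "(\<Sum>i\<in>I. c i * (\<alpha>(i0 := x)) i) = (\<Sum>i\<in>I. c i * \<alpha> i)"
      by (rule sum.cong) (use assms in auto)
    then show ?thesis using assms by simp
  qed
  show ?thesis
  proof
    assume "y \<in> lin_span_on F (insert i0 I) (\<alpha>(i0 := x))"
    then obtain c where "\<forall>i\<in>insert i0 I. c i \<in> F"
      and "y = (\<Sum>i\<in>insert i0 I. c i * (\<alpha>(i0 := x)) i)"
      unfolding lin_span_on_def by blast
    then have "y - c i0 * x \<in> lin_span_on F I \<alpha>" and "c i0 \<in> F"
      unfolding split lin_span_on_def by auto
    then show "\<exists>d\<in>F. y - d * x \<in> lin_span_on F I \<alpha>" by blast
  next
    assume "\<exists>d\<in>F. y - d * x \<in> lin_span_on F I \<alpha>"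
    then obtain d c where "d \<in> F" "\<forall>i\<in>I. c i \<in> F" "y - d * x = (\<Sum>i\<in>I. c i * \<alpha> i)"
      unfolding lin_span_on_def by blast
    moreover have "(\<Sum>i\<in>I. (c(i0 := d)) i * \<alpha> i) = (\<Sum>i\<in>I. c i * \<alpha> i)"
      by (rule sum.cong) (use assms in auto)
    ultimately have "\<forall>i\<in>insert i0 I. (c(i0 := d)) i \<in> F"
      and "y = (\<Sum>i\<in>insert i0 I. (c(i0 := d)) i * (\<alpha>(i0 := x)) i)"
      unfolding split by (auto simp: algebra_simps)
    then show "y \<in> lin_span_on F (insert i0 I) (\<alpha>(i0 := x))"
      unfolding lin_span_on_def by blast
  qed
qed

lemma card_lin_span_on_le:
  assumes "finite F" and "finite I"
  shows "card (lin_span_on F I \<alpha>) \<le> card F ^ card I"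
proof -
  let ?comb = "\<lambda>c. \<Sum>i\<in>I. c i * \<alpha> i"
  have "lin_span_on F I \<alpha> \<subseteq> ?comb ` PiE I (\<lambda>_. F)"
  proof
    fix y assume "y \<in> lin_span_on F I \<alpha>"
    then obtain c where c: "\<forall>i\<in>I. c i \<in> F" "y = ?comb c"
      unfolding lin_span_on_def by blast
    have "y = ?comb (restrict c I)"
      unfolding c(2) by (rule sum.cong) auto
    moreover have "restrict c I \<in> PiE I (\<lambda>_. F)" using c by auto
    ultimately show "y \<in> ?comb ` PiE I (\<lambda>_. F)" by blast
  qed
  then have "card (lin_span_on F I \<alpha>) \<le> card (?comb ` PiE I (\<lambda>_. F))"
    using assms by (intro card_mono finite_imageI finite_PiE) auto
  also have "\<dots> \<le> card (PiE I (\<lambda>_. F))"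
    using assms by (intro card_image_le finite_PiE) auto
  also have "\<dots> = card F ^ card I"
    using assms by (simp add: card_PiE)
  finally show ?thesis .
qed

lemma exists_lin_indep_on:
  fixes F :: "'a::{finite,field} set"
  assumes F: "is_subfield F" and I: "finite I" and dim: "card F ^ card I \<le> card (UNIV :: 'a set)"
  shows "\<exists>\<alpha>. lin_indep_on F I \<alpha>"
  using I dim
proof (induction I rule: finite_induct)
  case empty
  show ?case unfolding lin_indep_on_def by simp
next
  case (insert i I)
  have "2 \<le> card F" using card_subfield_ge_2[OF F] by simp
  then have "card F ^ card I < card F ^ card (insert i I)"
    using insert.hyps by simp
  then have less: "card F ^ card I < card (UNIV :: 'a set)"
    using insert.prems by linarith
  then obtain \<alpha> where \<alpha>: "lin_indep_on F I \<alpha>"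
    using insert.IH by auto
  have "card (lin_span_on F I \<alpha>) < card (UNIV :: 'a set)"
    using card_lin_span_on_le[of F I \<alpha>] insert.hyps less by simp
  then have "lin_span_on F I \<alpha> \<noteq> UNIV" by auto
  then obtain x where "x \<notin> lin_span_on F I \<alpha>" by blast
  then show ?case
    using lin_indep_on_insert[OF F \<alpha> insert.hyps] by blast
qed

lemma lin_indep_on_inj_on:
  assumes F: "is_subfield F" and I: "finite I" and ind: "lin_indep_on F I \<alpha>"
  shows "inj_on \<alpha> I"
proof (rule inj_onI, rule ccontr)
  fix a b assume a: "a \<in> I" and b: "b \<in> I" and eq: "\<alpha> a = \<alpha> b" and ne: "a \<noteq> b"
  define c where "c j = (if j = a then 1 else if j = b then -1 else 0 :: 'a)" for j
  have "(\<Sum>j\<in>I. c j * \<alpha> j) = (\<Sum>j\<in>I. (if j = a then \<alpha> a else 0) - (if j = b then \<alpha> b else 0))"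
    by (rule sum.cong) (use ne in \<open>simp_all add: c_def\<close>)
  also have "\<dots> = \<alpha> a - \<alpha> b"
    using a b I by (simp add: sum_subtractf)
  finally have "(\<Sum>j\<in>I. c j * \<alpha> j) = 0" using eq by simp
  moreover have "\<forall>j\<in>I. c j \<in> F"
    using F unfolding c_def is_subfield_def by auto
  ultimately have "c a = 0"
    using ind a unfolding lin_indep_on_def by blast
  then show False unfolding c_def by simp
qed

lemma lin_indep_set_over_image:
  assumes F: "is_subfield F" and I: "finite I" and ind: "lin_indep_on F I \<alpha>"
  shows "lin_indep_set_over F (\<alpha> ` I)"
  unfolding lin_indep_set_over_def
proof (intro conjI allI impI)
  show "finite (\<alpha> ` I)" using I by simp
  fix c assume c: "\<forall>x\<in>\<alpha> ` I. c x \<in> F" and "(\<Sum>x\<in>\<alpha> ` I. c x * x) = 0"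
  then have "(\<Sum>i\<in>I. c (\<alpha> i) * \<alpha> i) = 0"
    using sum.reindex[OF lin_indep_on_inj_on[OF assms], of "\<lambda>x. c x * x"] by simp
  moreover have "\<forall>i\<in>I. c (\<alpha> i) \<in> F" using c by blast
  ultimately have "\<forall>i\<in>I. c (\<alpha> i) = 0"
    using ind[unfolded lin_indep_on_def, rule_format, of "\<lambda>i. c (\<alpha> i)"] by blast
  then show "\<forall>x\<in>\<alpha> ` I. c x = 0" by blast
qed

lemma card_le_rk_over:
  assumes "lin_indep_set_over F S" and "S \<subseteq> v ` {0..<k}"
  shows "card S \<le> rk_over F k v"
  unfolding rk_over_def
proof (rule Max_ge)
  show "finite {card S | S. S \<subseteq> v ` {0..<k} \<and> lin_indep_set_over F S}"
    by (rule finite_subset[of _ "card ` Pow (v ` {0..<k})"]) auto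
qed (use assms in blast)

lemma card_insert_le_rk_over:
  assumes F: "is_subfield F" and I: "finite I" "i0 \<notin> I" and ind: "lin_indep_on F I \<alpha>"
    and entries: "\<alpha> ` I \<subseteq> v ` {0..<k}" and j: "j < k"
    and notin: "v j \<notin> lin_span_on F I \<alpha>"
  shows "card I + 1 \<le> rk_over F k v"
proof -
  let ?J = "insert i0 I" and ?\<beta> = "\<alpha>(i0 := v j)"
  have ind': "lin_indep_on F ?J ?\<beta>" by (rule lin_indep_on_insert[OF F ind I notin])
  have fin: "finite ?J" using I(1) by simp
  have image: "?\<beta> ` ?J = insert (v j) (\<alpha> ` I)" using I(2) by auto
  then have "card (?\<beta> ` ?J) \<le> rk_over F k v"
    using entries j by (intro card_le_rk_over[OF lin_indep_set_over_image[OF F fin ind']]) auto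
  moreover have "card (?\<beta> ` ?J) = card I + 1"
    using card_image[OF lin_indep_on_inj_on[OF F fin ind']] I by simp
  ultimately show ?thesis by simp
qed

subsection \<open>Choosing the coefficients\<close>

lemma card_affine_preimage_le:
  fixes a :: "'a::field"
  assumes "a \<noteq> 0" and "finite P"
  shows "card {x. a * x + u \<in> P} \<le> card P"
proof -
  have "{x. a * x + u \<in> P} \<subseteq> (\<lambda>y. (y - u) / a) ` P"
  proof
    fix x assume "x \<in> {x. a * x + u \<in> P}"
    moreover have "x = ((a * x + u) - u) / a" using assms(1) by simp
    ultimately show "x \<in> (\<lambda>y. (y - u) / a) ` P" by blast
  qed
  then have "card {x. a * x + u \<in> P} \<le> card ((\<lambda>y. (y - u) / a) ` P)"
    using assms(2) by (intro card_mono) auto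
  also have "\<dots> \<le> card P" by (rule card_image_le[OF assms(2)])
  finally show ?thesis .
qed

lemma exists_avoiding_affine_preimages:
  fixes P L :: "'a::{finite,field} set"
  assumes \<beta>: "\<beta> \<notin> L" and small: "card P * (card L + 1) < card (UNIV :: 'a set)"
  shows "\<exists>x. x \<notin> P \<and> (\<forall>l\<in>L. (\<beta> - l) * x + u \<notin> P)"
proof -
  define Bad where "Bad = P \<union> (\<Union>l\<in>L. {x. (\<beta> - l) * x + u \<in> P})"
  have "card Bad \<le> card P + card (\<Union>l\<in>L. {x. (\<beta> - l) * x + u \<in> P})"
    unfolding Bad_def by (rule card_Un_le)
  also have "card (\<Union>l\<in>L. {x. (\<beta> - l) * x + u \<in> P}) \<le> (\<Sum>l\<in>L. card {x. (\<beta> - l) * x + u \<in> P})"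
    by (rule card_UN_le) simp
  also have "\<dots> \<le> card L * card P"
  proof (rule sum_bounded_above[of L _ "card P", simplified])
    show "card {x. (\<beta> - l) * x + u \<in> P} \<le> card P" if "l \<in> L" for l
      using \<beta> that by (intro card_affine_preimage_le) auto
  qed
  finally have "card Bad < card (UNIV :: 'a set)"
    using small by (simp add: algebra_simps)
  then have "Bad \<noteq> UNIV" by auto
  then obtain x where "x \<notin> Bad" by blast
  then show ?thesis unfolding Bad_def by blast
qed

lemma exists_lin_indep_on_lin_comb_notin_span:
  fixes F :: "'a::{finite,field} set" and b :: "'i \<Rightarrow> 'a"
  assumes F: "is_subfield F" and I: "finite I" "i0 \<notin> I" and b: "b i0 \<notin> F"
    and small: "card F ^ card I * (card F + 1) < card (UNIV :: 'a set)"
  shows "\<exists>\<alpha>. lin_indep_on F (insert i0 I) \<alpha> \<and>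
             (\<Sum>i\<in>insert i0 I. \<alpha> i * b i) \<notin> lin_span_on F (insert i0 I) \<alpha>"
proof -
  have "card F ^ card I \<le> card (UNIV :: 'a set)"
  proof -
    have "card F ^ card I \<le> card F ^ card I * (card F + 1)" by simp
    then show ?thesis using small by linarith
  qed
  then obtain \<gamma> where \<gamma>: "lin_indep_on F I \<gamma>"
    using exists_lin_indep_on[OF F I(1)] by blast
  define P where "P = lin_span_on F I \<gamma>"
  define u where "u = (\<Sum>i\<in>I. \<gamma> i * b i)"
  have "card P \<le> card F ^ card I"
    using card_lin_span_on_le[of F I \<gamma>] I(1) unfolding P_def by simp
  from mult_le_mono1[OF this, of "card F + 1"]
  have "card P * (card F + 1) < card (UNIV :: 'a set)"
    using small by linarith
  then obtain x where x: "x \<notin> P" and avoid: "\<forall>l\<in>F. (b i0 - l) * x + u \<notin> P"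
    using exists_avoiding_affine_preimages[OF b] by blast
  define \<alpha> where "\<alpha> = \<gamma>(i0 := x)"
  have "(\<Sum>i\<in>I. \<alpha> i * b i) = u"
    unfolding \<alpha>_def u_def by (rule sum.cong) (use I in auto)
  then have comb: "(\<Sum>i\<in>insert i0 I. \<alpha> i * b i) = x * b i0 + u"
    using I unfolding \<alpha>_def by simp
  have "(\<Sum>i\<in>insert i0 I. \<alpha> i * b i) \<notin> lin_span_on F (insert i0 I) \<alpha>"
    unfolding \<alpha>_def lin_span_on_insert[OF I] comb[unfolded \<alpha>_def]
    using avoid unfolding P_def by (auto simp: algebra_simps)
  moreover have "lin_indep_on F (insert i0 I) \<alpha>"
    unfolding \<alpha>_def using lin_indep_on_insert[OF F \<gamma> I] x P_def by simp
  ultimately show ?thesis by blast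
qed

lemma power_mult_succ_less:
  assumes "2 \<le> (q::nat)"
  shows "q ^ n * (q + 1) < q ^ (n + 2)"
proof -
  have "q + 1 < q * q" using mult_le_mono1[OF assms, of q] assms by linarith
  then have "q ^ n * (q + 1) < q ^ n * (q * q)"
    using assms by (intro mult_strict_left_mono) auto
  also have "\<dots> = q ^ (n + 2)" by (simp add: power_add power2_eq_square)
  finally show ?thesis .
qed

subsection \<open>Pivots\<close>

lemma full_row_rank_row_nonzero:
  fixes M :: "nat \<Rightarrow> nat \<Rightarrow> 'a::field"
  assumes "full_row_rank t k M" and "r < t"
  shows "row_nonzero k M r"
proof (rule ccontr)
  define c where "c i = (if i = r then 1 else 0 :: 'a)" for i
  assume "\<not> row_nonzero k M r"
  moreover have "(\<Sum>i<t. c i * M i j) = M r j" for j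
  proof -
    have "(\<Sum>i<t. c i * M i j) = (\<Sum>i<t. if i = r then M r j else 0)"
      by (rule sum.cong) (simp_all add: c_def)
    then show ?thesis using assms(2) by simp
  qed
  ultimately have "\<forall>j<k. (\<Sum>i<t. c i * M i j) = 0"
    unfolding row_nonzero_def by simp
  then have "c r = 0"
    using assms unfolding full_row_rank_def by blast
  then show False unfolding c_def by simp
qed

lemma rref_pivot:
  assumes "rref t k N" and "i < t" and "row_nonzero k N i"
  shows "lead_pos k N i < k \<and> N i (lead_pos k N i) = 1 \<and>
         (\<forall>i'<t. i' \<noteq> i \<longrightarrow> N i' (lead_pos k N i) = 0)"
proof -
  obtain j where "j < k" "N i j \<noteq> 0" using assms(3) unfolding row_nonzero_def by blast
  moreover have "(LEAST j. N i j \<noteq> 0) \<le> j" by (rule Least_le) fact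
  ultimately have "lead_pos k N i < k"
    using assms(3) unfolding lead_pos_def by simp
  then show ?thesis using assms unfolding rref_def by blast
qed

lemma almost_rref_pivot:
  assumes "almost_rref t k M" and "full_row_rank t k M" and "r < t"
  shows "\<exists>p<k. M r p = 1 \<and> (\<forall>r'<t. r' \<noteq> r \<longrightarrow> M r' p = 0)"
proof -
  obtain \<sigma> where \<sigma>: "bij_betw \<sigma> {0..<t} {0..<t}" and N: "rref t k (\<lambda>i. M (\<sigma> i))"
    using assms(1) unfolding almost_rref_def by blast
  have "r \<in> \<sigma> ` {0..<t}" using \<sigma> assms(3) unfolding bij_betw_def by simp
  then obtain i where i: "i < t" "\<sigma> i = r" by auto
  have "row_nonzero k (\<lambda>i. M (\<sigma> i)) i"
    using full_row_rank_row_nonzero[OF assms(2,3)] i unfolding row_nonzero_def by simp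
  then obtain p where p: "p < k" "M r p = 1" and zero: "\<forall>i'<t. i' \<noteq> i \<longrightarrow> M (\<sigma> i') p = 0"
    using rref_pivot[OF N i(1)] i by blast
  have "M r' p = 0" if "r' < t" "r' \<noteq> r" for r'
  proof -
    have "r' \<in> \<sigma> ` {0..<t}" using \<sigma> that(1) unfolding bij_betw_def by simp
    then obtain i' where "i' < t" "\<sigma> i' = r'" by auto
    then show ?thesis using zero i that(2) by blast
  qed
  with p show ?thesis by blast
qed

lemma coeff_in_row_comb_entries:
  assumes "almost_rref t k M" and "full_row_rank t k M" and "r < t"
  shows "\<alpha> r \<in> (\<lambda>j. \<Sum>i<t. \<alpha> i * M i j) ` {0..<k}"
proof -
  obtain p where p: "p < k" "M r p = 1" "\<forall>r'<t. r' \<noteq> r \<longrightarrow> M r' p = 0"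
    using almost_rref_pivot[OF assms] by blast
  have "(\<Sum>i<t. \<alpha> i * M i p) = (\<Sum>i<t. if i = r then \<alpha> r else 0)"
    by (rule sum.cong) (use p in auto)
  also have "\<dots> = \<alpha> r" using assms(3) by simp
  finally show ?thesis using p(1) by (intro image_eqI[of _ _ p]) auto
qed

theorem proposition3p10:
  fixes q m t k :: nat
    and Fq :: "'a::{finite,field} set"
    and M :: "nat \<Rightarrow> nat \<Rightarrow> 'a"
  assumes "prime_power q"
    and "card (UNIV :: 'a set) = q ^ m"
    and "is_subfield Fq" and "card Fq = q"
    and "1 \<le> t" and "t < k" and "k \<le> m"
    and "full_row_rank t k M"
    and "almost_rref t k M"
    and "\<exists>j<k. M 0 j \<notin> Fq"
  shows "\<exists>\<alpha> :: nat \<Rightarrow> 'a. lin_indep_family_over Fq t \<alpha> \<and>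
           rk_over Fq k (\<lambda>j. \<Sum>i<t. \<alpha> i * M i j) \<ge> t + 1"
proof -
  obtain j0 where j0: "j0 < k" "M 0 j0 \<notin> Fq" using assms(10) by blast
  have q: "2 \<le> q" using card_subfield_ge_2[OF assms(3)] assms(4) by simp
  have "q ^ (t - 1) * (q + 1) < q ^ (t - 1 + 2)" by (rule power_mult_succ_less[OF q])
  also have "\<dots> \<le> q ^ m" using assms(5-7) q by (intro power_increasing) auto
  finally have small: "card Fq ^ card {1..<t} * (card Fq + 1) < card (UNIV :: 'a set)"
    using assms(2,4) by simp
  have rows: "insert 0 {1..<t} = {..<t}" using assms(5) by auto
  obtain \<alpha> where ind: "lin_indep_on Fq {..<t} \<alpha>"
    and w: "(\<Sum>i<t. \<alpha> i * M i j0) \<notin> lin_span_on Fq {..<t} \<alpha>"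
    using exists_lin_indep_on_lin_comb_notin_span[OF assms(3), of "{1..<t}" 0 "\<lambda>i. M i j0"]
      j0(2) small unfolding rows by auto
  have "\<alpha> ` {..<t} \<subseteq> (\<lambda>j. \<Sum>i<t. \<alpha> i * M i j) ` {0..<k}"
    using coeff_in_row_comb_entries[OF assms(9,8)] by blast
  from card_insert_le_rk_over[OF assms(3) _ _ ind this j0(1), of t] w
  have "t + 1 \<le> rk_over Fq k (\<lambda>j. \<Sum>i<t. \<alpha> i * M i j)" by simp
  then show ?thesis
    using ind unfolding lin_indep_family_over_iff_lin_indep_on by blast
qed

end
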